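(* In every approval-based SCV instance, every committee satisfying SW-JR also satisfies weak-SW-JR. Conversely, there exist an approval-based SCV instance and a committee that satisfies weak-SW-JR but not SW-JR.
   Context: An approval-based sub-committee voting (SCV) instance consists of a set of voters $N=\{1,\ldots,n\}$, a finite set of candidates $C$ partitioned into candidate subsets $C_1,\ldots,C_\ell$, positive integer quotas $k_j\le |C_j|$ with $k=\sum_{j=1}^\ell k_j$, and approval ballots $A_i\subseteq C$ for $i\in N$. A committee is a set $W\subseteq C$ with $|W\cap C_j|=k_j$ for every $j$. $W$ satisfies SW-JR if for every $X\subseteq N$ with $|X|\ge n/k$ and $|\bigcap_{i\in X}A_i|\ge 1$ we have $|W\cap \bigcup_{i\in X}A_i|\ge 1$. $W$ satisfies weak-SW-JR if for every $X\subseteq N$ with $|X|\ge n/k$ and $|(\bigcap_{i\in X}A_i)\cap C_j|\ge 1$ for all $j=1,\ldots,\ell$ we have $|W\cap \bigcup_{i\in X}A_i|\ge 1$. *)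

theory Defs
  imports Complex_Main
begin

definition scv_instance ::
  "nat \<Rightarrow> 'c set \<Rightarrow> 'c set list \<Rightarrow> nat list \<Rightarrow> (nat \<Rightarrow> 'c set) \<Rightarrow> bool" where
  "scv_instance n C Cs ks A \<longleftrightarrow>
     n \<ge> 1 \<and> finite C \<and> length Cs \<ge> 1 \<and> length ks = length Cs \<and>
     (\<forall>j < length Cs. Cs ! j \<noteq> {}) \<and>
     (\<forall>j < length Cs. \<forall>j' < length Cs. j \<noteq> j' \<longrightarrow> Cs ! j \<inter> Cs ! j' = {}) \<and>
     (\<Union>j < length Cs. Cs ! j) = C \<and>
     (\<forall>j < length Cs. 1 \<le> ks ! j \<and> ks ! j \<le> card (Cs ! j)) \<and>
     (\<forall>i \<in> {1..n}. A i \<subseteq> C)"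

definition total_k :: "nat list \<Rightarrow> nat" where
  "total_k ks = sum_list ks"

definition committee :: "'c set \<Rightarrow> 'c set list \<Rightarrow> nat list \<Rightarrow> 'c set \<Rightarrow> bool" where
  "committee C Cs ks W \<longleftrightarrow> W \<subseteq> C \<and> (\<forall>j < length Cs. card (W \<inter> Cs ! j) = ks ! j)"

definition SW_JR ::
  "nat \<Rightarrow> 'c set list \<Rightarrow> nat list \<Rightarrow> (nat \<Rightarrow> 'c set) \<Rightarrow> 'c set \<Rightarrow> bool" where
  "SW_JR n Cs ks A W \<longleftrightarrow>
     (\<forall>X \<subseteq> {1..n}. real (card X) \<ge> real n / real (total_k ks) \<and>
        card (\<Inter>i\<in>X. A i) \<ge> 1 \<longrightarrow> card (W \<inter> (\<Union>i\<in>X. A i)) \<ge> 1)"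

definition weak_SW_JR ::
  "nat \<Rightarrow> 'c set list \<Rightarrow> nat list \<Rightarrow> (nat \<Rightarrow> 'c set) \<Rightarrow> 'c set \<Rightarrow> bool" where
  "weak_SW_JR n Cs ks A W \<longleftrightarrow>
     (\<forall>X \<subseteq> {1..n}. real (card X) \<ge> real n / real (total_k ks) \<and>
        (\<forall>j < length Cs. card ((\<Inter>i\<in>X. A i) \<inter> Cs ! j) \<ge> 1) \<longrightarrow>
        card (W \<inter> (\<Union>i\<in>X. A i)) \<ge> 1)"

end

theory Submission
  imports Defs
begin

lemma total_k_pos:
  assumes "scv_instance n C Cs ks A"
  shows "total_k ks > 0"
proof -
  have "0 < length ks" and "1 \<le> ks ! 0"
    using assms unfolding scv_instance_def by (auto simp: Suc_le_eq)
  moreover have "ks ! 0 \<le> sum_list ks"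
    using \<open>0 < length ks\<close> by (intro elem_le_sum_list)
  ultimately show ?thesis unfolding total_k_def by linarith
qed

lemma large_group_nonempty:
  assumes "scv_instance n C Cs ks A"
    and "real n / real (total_k ks) \<le> real (card X)"
  shows "X \<noteq> {}"
proof -
  have "n \<ge> 1" using assms(1) unfolding scv_instance_def by simp
  with total_k_pos[OF assms(1)] have "real n / real (total_k ks) > 0" by simp
  with assms(2) show ?thesis by auto
qed

lemma SW_JR_imp_weak_SW_JR:
  assumes inst: "scv_instance n C Cs ks A" and sw: "SW_JR n Cs ks A W"
  shows "weak_SW_JR n Cs ks A W"
  unfolding weak_SW_JR_def
proof (intro allI impI, elim conjE)
  fix X
  assume X: "X \<subseteq> {1..n}"
    and large: "real n / real (total_k ks) \<le> real (card X)"
    and common: "\<forall>j < length Cs. card ((\<Inter>i\<in>X. A i) \<inter> Cs ! j) \<ge> 1"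
  obtain x where "x \<in> X" using large_group_nonempty[OF inst large] by blast
  with X inst have "(\<Inter>i\<in>X. A i) \<subseteq> C" unfolding scv_instance_def by blast
  hence fin: "finite (\<Inter>i\<in>X. A i)" using inst unfolding scv_instance_def
    by (blast intro: finite_subset)
  have "0 < length Cs" using inst unfolding scv_instance_def by (simp add: Suc_le_eq)
  with common have "(\<Inter>i\<in>X. A i) \<inter> Cs ! 0 \<noteq> {}" by fastforce
  with fin have "card (\<Inter>i\<in>X. A i) \<ge> 1"
    by (metis One_nat_def Suc_leI card_gt_0_iff disjoint_iff empty_iff)
  with sw X large show "card (W \<inter> (\<Union>i\<in>X. A i)) \<ge> 1"
    unfolding SW_JR_def by blast
qed

lemma weak_SW_JR_if_unapproved_subset:
  assumes inst: "scv_instance n C Cs ks A"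
    and j: "j < length Cs" and unapproved: "\<forall>i \<in> {1..n}. A i \<inter> Cs ! j = {}"
  shows "weak_SW_JR n Cs ks A W"
  unfolding weak_SW_JR_def
proof (intro allI impI, elim conjE)
  fix X
  assume X: "X \<subseteq> {1..n}"
    and large: "real n / real (total_k ks) \<le> real (card X)"
    and common: "\<forall>j < length Cs. card ((\<Inter>i\<in>X. A i) \<inter> Cs ! j) \<ge> 1"
  obtain x where "x \<in> X" using large_group_nonempty[OF inst large] by blast
  with X unapproved have "(\<Inter>i\<in>X. A i) \<inter> Cs ! j = {}" by blast
  with common j show "card (W \<inter> (\<Union>i\<in>X. A i)) \<ge> 1" by fastforce
qed

theorem mainTheorem3:
  shows "(\<forall>(n::nat) (C::'c set) Cs ks A W.
            scv_instance n C Cs ks A \<and> committee C Cs ks W \<and> SW_JR n Cs ks A W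
              \<longrightarrow> weak_SW_JR n Cs ks A W)
       \<and> (\<exists>(n::nat) (C::nat set) Cs ks A W.
            scv_instance n C Cs ks A \<and> committee C Cs ks W \<and>
            weak_SW_JR n Cs ks A W \<and> \<not> SW_JR n Cs ks A W)"
proof (intro conjI)
  show "\<forall>(n::nat) (C::'c set) Cs ks A W.
            scv_instance n C Cs ks A \<and> committee C Cs ks W \<and> SW_JR n Cs ks A W
              \<longrightarrow> weak_SW_JR n Cs ks A W"
    using SW_JR_imp_weak_SW_JR by blast
next
  text \<open>The committee misses the only approved candidate, while the unapproved
    subset {2,3} makes weak-SW-JR vacuous.\<close>
  let ?Cs = "[{0,1::nat},{2,3}]" and ?A = "\<lambda>i::nat. {0::nat}" and ?W = "{1,2::nat}"
  have inst: "scv_instance 1 {0,1,2,3} ?Cs [1,1] ?A"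
    unfolding scv_instance_def by (auto simp: nth_Cons' lessThan_Suc)
  moreover have "committee {0,1,2,3} ?Cs [1,1] ?W"
    unfolding committee_def by (auto simp: nth_Cons')
  moreover have "weak_SW_JR 1 ?Cs [1,1] ?A ?W"
    using weak_SW_JR_if_unapproved_subset[OF inst, of 1] by simp
  moreover have "\<not> SW_JR 1 ?Cs [1,1] ?A ?W"
    unfolding SW_JR_def total_k_def by (auto intro!: exI[of _ "{1}"])
  ultimately show "\<exists>(n::nat) (C::nat set) Cs ks A W.
            scv_instance n C Cs ks A \<and> committee C Cs ks W \<and>
            weak_SW_JR n Cs ks A W \<and> \<not> SW_JR n Cs ks A W"
    by blast
qed

end
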